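(* Let $X$ be a real Hilbert space, $A,B\colon X\rightrightarrows X$ maximally monotone, $T:=\operatorname{Id}-J_A+J_BR_A$, $v:=P_{\overline{\operatorname{ran}}(\operatorname{Id}-T)}(0)$, $D:=\operatorname{dom}A-\operatorname{dom}B$, $R:=\operatorname{ran}A+\operatorname{ran}B$, $v_D:=P_{\overline D}(0)$, $v_R:=P_{\overline R}(0)$, and assume $\overline{\operatorname{ran}}(\operatorname{Id}-T)=\overline{D\cap R}=\overline D\cap\overline R$. Suppose $v_R=0$, that $f\in X$ satisfies $f=v+Tf$, and let $x\in X$. Then (i) for all $n\in\mathbb N$, $J_AT^nf=J_A(f-nv_D)=J_Af$; (ii) $(J_AT^nx)_{n\in\mathbb N}$ is bounded; (iii) $(J_BR_AT^nx)_{n\in\mathbb N}$ is bounded.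
   Context: $J_C:=(\operatorname{Id}+C)^{-1}$, $R_C:=2J_C-\operatorname{Id}$ for maximally monotone $C$; $P_S$ is the projection onto a nonempty closed convex set $S$. *)

theory Defs
  imports "HOL-Analysis.Analysis"
begin

text \<open>Set-valued operators X \<rightrightarrows> X are modelled as functions 'a \<Rightarrow> 'a set
  (A x is the set of images of x; the graph is {(x,u). u \<in> A x}).\<close>

definition monotone_op :: "('a::real_inner \<Rightarrow> 'a set) \<Rightarrow> bool" where
  "monotone_op A \<longleftrightarrow> (\<forall>x y u w. u \<in> A x \<longrightarrow> w \<in> A y \<longrightarrow> 0 \<le> inner (x - y) (u - w))"

definition maximally_monotone :: "('a::real_inner \<Rightarrow> 'a set) \<Rightarrow> bool" where
  "maximally_monotone A \<longleftrightarrow> monotone_op A \<and>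
     (\<forall>B. monotone_op B \<and> (\<forall>x. A x \<subseteq> B x) \<longrightarrow> B = A)"

definition dom_op :: "('a \<Rightarrow> 'b set) \<Rightarrow> 'a set" where
  "dom_op A = {x. A x \<noteq> {}}"

definition ran_op :: "('a \<Rightarrow> 'b set) \<Rightarrow> 'b set" where
  "ran_op A = {u. \<exists>x. u \<in> A x}"

text \<open>Resolvent J_A = (Id + A)^{-1}: J_A x is the (unique, for maximally monotone A)
  point p with x \<in> p + A p.\<close>
definition resolvent :: "('a::real_inner \<Rightarrow> 'a set) \<Rightarrow> 'a \<Rightarrow> 'a" where
  "resolvent A x = (THE p. x - p \<in> A p)"

definition reflected_resolvent :: "('a::real_inner \<Rightarrow> 'a set) \<Rightarrow> 'a \<Rightarrow> 'a" where
  "reflected_resolvent A x = 2 *\<^sub>R resolvent A x - x"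

definition proj :: "'a::real_inner set \<Rightarrow> 'a \<Rightarrow> 'a" where
  "proj S x = (THE p. p \<in> S \<and> (\<forall>y\<in>S. norm (x - p) \<le> norm (x - y)))"

definition DR_op :: "('a::real_inner \<Rightarrow> 'a set) \<Rightarrow> ('a \<Rightarrow> 'a set) \<Rightarrow> 'a \<Rightarrow> 'a" where
  "DR_op A B x = x - resolvent A x + resolvent B (reflected_resolvent A x)"

end

theory Submission
  imports Defs
begin

text \<open>By Minty's theorem resolvents of maximally monotone operators are single-valued and
  firmly nonexpansive, hence so is the Douglas--Rachford operator \<open>T\<close>, and the closures of
  domains and ranges of such operators are convex.  Firm nonexpansiveness together with the
  minimality of \<open>\<parallel>v\<parallel>\<close> gives \<open>T\<^sup>n f = f - n v\<close>.  Since \<open>\<langle>v\<^sub>D, \<cdot>\<rangle>\<close> is bounded above on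
  \<open>dom B\<close>, we get \<open>ran B + v\<^sub>D \<subseteq> cl(ran B)\<close>; thus \<open>v\<^sub>R = 0\<close> puts \<open>v\<^sub>D\<close> into
  \<open>cl D \<inter> cl R\<close>, whence \<open>v = v\<^sub>D\<close>.  Monotonicity of \<open>A\<close> and \<open>B\<close> along the orbit, combined
  with the variational inequality of \<open>v\<^sub>D\<close> on \<open>cl D\<close>, shows that \<open>J\<^sub>A\<close> is constant on the
  orbit of \<open>f\<close>; boundedness for arbitrary \<open>x\<close> follows as \<open>T\<^sup>n\<close>, \<open>J\<^sub>A\<close> and \<open>J\<^sub>B R\<^sub>A\<close> are
  nonexpansive.\<close>

lemma nonneg_of_small_perturbations:
  fixes a b :: real
  assumes "\<And>t. 0 < t \<Longrightarrow> t \<le> 1 \<Longrightarrow> 0 \<le> a + t * b"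
  shows "0 \<le> a"
proof (rule tendsto_lowerbound)
  show "((\<lambda>t. a + t * b) \<longlongrightarrow> a) (at_right 0)"
    by (auto intro!: tendsto_eq_intros)
  show "\<forall>\<^sub>F t in at_right 0. 0 \<le> a + t * b"
    using eventually_at_right_real[OF zero_less_one] by eventually_elim (use assms in auto)
qed simp

lemma sq_le_linear_imp_less:
  fixes r a b e :: real
  assumes "0 \<le> r" and "r\<^sup>2 \<le> a * r + b" and "0 \<le> a" and "a \<le> e / 2" and "b \<le> e\<^sup>2 / 4"
    and "0 < e"
  shows "r < e"
proof (rule ccontr)
  assume "\<not> r < e"
  then have "a * r \<le> r\<^sup>2 / 2"
    using assms mult_right_mono[of a "r / 2" r] by (simp add: power2_eq_square)
  moreover have "e\<^sup>2 \<le> r\<^sup>2"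
    using \<open>\<not> r < e\<close> \<open>0 < e\<close> by (simp add: power_mono)
  moreover have "0 < r\<^sup>2"
    using \<open>\<not> r < e\<close> \<open>0 < e\<close> by simp
  ultimately show False
    using assms(2,5) by linarith
qed

lemma mem_closure_if_quadratic_approx:
  fixes x :: "'a::real_normed_vector"
  assumes "0 \<le> K" and "0 \<le> M"
    and approx: "\<And>l. 0 < l \<Longrightarrow> \<exists>y\<in>S. (norm (y - x))\<^sup>2 \<le> l * K * norm (y - x) + l * M"
  shows "x \<in> closure S"
  unfolding closure_approachable
proof (intro allI impI)
  fix e :: real assume "0 < e"
  define l where "l = min (e / (2 * (K + 1))) (e\<^sup>2 / (4 * (M + 1)))"
  have "0 < l"
    using \<open>0 < e\<close> assms by (simp add: l_def)
  have lK: "l * K \<le> e / 2"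
  proof -
    have "l * K \<le> e / (2 * (K + 1)) * (K + 1)"
      using \<open>0 < l\<close> \<open>0 \<le> K\<close> by (intro mult_mono) (simp_all add: l_def)
    also have "\<dots> = e / 2"
      using \<open>0 \<le> K\<close> by (simp add: field_simps)
    finally show ?thesis .
  qed
  have lM: "l * M \<le> e\<^sup>2 / 4"
  proof -
    have "l * M \<le> e\<^sup>2 / (4 * (M + 1)) * (M + 1)"
      using \<open>0 < l\<close> \<open>0 \<le> M\<close> by (intro mult_mono) (simp_all add: l_def)
    also have "\<dots> = e\<^sup>2 / 4"
      using \<open>0 \<le> M\<close> by (simp add: field_simps)
    finally show ?thesis .
  qed
  obtain y where "y \<in> S" and y: "(norm (y - x))\<^sup>2 \<le> l * K * norm (y - x) + l * M"
    using approx[OF \<open>0 < l\<close>] by blast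
  have "norm (y - x) < e"
    using \<open>0 < l\<close> \<open>0 \<le> K\<close>
    by (intro sq_le_linear_imp_less[OF norm_ge_zero y _ lK lM \<open>0 < e\<close>]) simp
  then show "\<exists>y\<in>S. dist y x < e"
    using \<open>y \<in> S\<close> by (auto simp: dist_norm)
qed

lemma convex_closure_if_segments:
  fixes S :: "'a::real_normed_vector set"
  assumes "\<And>p q t. p \<in> S \<Longrightarrow> q \<in> S \<Longrightarrow> 0 \<le> t \<Longrightarrow> t \<le> 1 \<Longrightarrow> (1 - t) *\<^sub>R p + t *\<^sub>R q \<in> closure S"
  shows "convex (closure S)"
proof (rule convexI)
  fix p q and u v :: real
  assume "p \<in> closure S" "q \<in> closure S" "0 \<le> u" "0 \<le> v" "u + v = 1"
  then obtain P Q where P: "\<And>n. P n \<in> S" "P \<longlonglongrightarrow> p" and Q: "\<And>n. Q n \<in> S" "Q \<longlonglongrightarrow> q"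
    unfolding closure_sequential by metis
  have "u = 1 - v" "v \<le> 1"
    using \<open>0 \<le> u\<close> \<open>u + v = 1\<close> by linarith+
  then have "\<And>n. u *\<^sub>R P n + v *\<^sub>R Q n \<in> closure S"
    using assms[OF P(1) Q(1) \<open>0 \<le> v\<close>] by simp
  moreover have "(\<lambda>n. u *\<^sub>R P n + v *\<^sub>R Q n) \<longlonglongrightarrow> u *\<^sub>R p + v *\<^sub>R q"
    by (intro tendsto_intros P(2) Q(2))
  ultimately show "u *\<^sub>R p + v *\<^sub>R q \<in> closure S"
    by (rule closed_sequentially[OF closed_closure])
qed

lemma convex_closure_set_plus:
  fixes S T :: "'a::real_normed_vector set"
  assumes "convex (closure S)" and "convex (closure T)"
  shows "convex (closure (S + T))"
proof -
  have "closure (S + T) = closure (closure S + closure T)"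
    by (intro equalityI closure_mono set_plus_mono2 closure_subset
        closure_minimal[OF closure_sum closed_closure])
  then show ?thesis
    by (simp add: assms convex_set_plus)
qed

lemma Cauchy_if_sq_dist_le:
  fixes Z :: "nat \<Rightarrow> 'a::real_normed_vector"
  assumes "\<epsilon> \<longlonglongrightarrow> 0" and "\<And>k j. (norm (Z k - Z j))\<^sup>2 \<le> \<epsilon> k + \<epsilon> j"
  shows "Cauchy Z"
proof (rule CauchyI)
  fix e :: real assume "0 < e"
  then have "\<forall>\<^sub>F k in sequentially. \<epsilon> k < e\<^sup>2 / 2"
    using order_tendstoD(2)[OF assms(1), of "e\<^sup>2 / 2"] by simp
  then obtain M where M: "\<And>k. M \<le> k \<Longrightarrow> \<epsilon> k < e\<^sup>2 / 2"
    by (auto simp: eventually_sequentially)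
  show "\<exists>M. \<forall>k\<ge>M. \<forall>j\<ge>M. norm (Z k - Z j) < e"
  proof (intro exI allI impI)
    fix k j assume "M \<le> k" "M \<le> j"
    then have "(norm (Z k - Z j))\<^sup>2 < e\<^sup>2"
      using assms(2)[of k j] M[OF \<open>M \<le> k\<close>] M[OF \<open>M \<le> j\<close>] by argo
    then show "norm (Z k - Z j) < e"
      using \<open>0 < e\<close> by (simp add: power2_less_imp_less)
  qed
qed

section \<open>Minimisation in Hilbert space\<close>

lemma exists_minimiser_plus_half_sq_norm:
  fixes P :: "'a::{real_inner,complete_space} \<Rightarrow> real \<Rightarrow> bool"
  assumes "P z0 c0"
    and bdd: "\<And>z c. P z c \<Longrightarrow> L \<le> c + (norm z)\<^sup>2 / 2"
    and midpoint: "\<And>z c w d. P z c \<Longrightarrow> P w d \<Longrightarrow> P ((1/2) *\<^sub>R (z + w)) ((c + d) / 2)"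
    and closed: "\<And>Z C z c. (\<And>k. P (Z k) (C k)) \<Longrightarrow> Z \<longlonglongrightarrow> z \<Longrightarrow> C \<longlonglongrightarrow> c \<Longrightarrow> P z c"
  shows "\<exists>z c. P z c \<and> (\<forall>w d. P w d \<longrightarrow> c + (norm z)\<^sup>2 / 2 \<le> d + (norm w)\<^sup>2 / 2)"
proof -
  define V where "V = {c + (norm z)\<^sup>2 / 2 | z c. P z c}"
  define m where "m = Inf V"
  define \<epsilon> where "\<epsilon> k = inverse (real (Suc k))" for k
  have \<epsilon>_lim: "\<epsilon> \<longlonglongrightarrow> 0"
    unfolding \<epsilon>_def by (rule LIMSEQ_inverse_real_of_nat)
  have m_le: "m \<le> c + (norm z)\<^sup>2 / 2" if "P z c" for z c
    unfolding m_def V_def using that bdd by (intro cInf_lower bdd_belowI) auto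
  have "\<exists>z c. P z c \<and> c + (norm z)\<^sup>2 / 2 < m + \<epsilon> k" for k
  proof -
    have "Inf V < m + \<epsilon> k" by (simp add: m_def \<epsilon>_def)
    moreover have "V \<noteq> {}" using \<open>P z0 c0\<close> by (auto simp: V_def)
    ultimately obtain y where "y \<in> V" "y < m + \<epsilon> k"
      using cInf_lessD by blast
    then show ?thesis by (auto simp: V_def)
  qed
  then obtain Z C where PZ: "\<And>k. P (Z k) (C k)"
    and near: "\<And>k. C k + (norm (Z k))\<^sup>2 / 2 < m + \<epsilon> k"
    by metis
  \<comment> \<open>The parallelogram law turns near-minimality of two points into closeness.\<close>
  have close: "(norm (Z k - Z j))\<^sup>2 \<le> 4 * (\<epsilon> k + \<epsilon> j)" for k j
  proof -
    have "(norm ((1/2) *\<^sub>R (Z k + Z j)))\<^sup>2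
        = ((norm (Z k))\<^sup>2 + (norm (Z j))\<^sup>2) / 2 - (norm (Z k - Z j))\<^sup>2 / 4"
      by (simp add: power2_norm_eq_inner inner_add_left inner_add_right inner_diff_left
          inner_diff_right inner_commute field_simps)
    moreover have "m \<le> (C k + C j) / 2 + (norm ((1/2) *\<^sub>R (Z k + Z j)))\<^sup>2 / 2"
      using m_le[OF midpoint[OF PZ PZ]] .
    ultimately show ?thesis using near[of k] near[of j] by argo
  qed
  have "(\<lambda>k. 4 * \<epsilon> k) \<longlonglongrightarrow> 0"
    using tendsto_mult_right_zero[OF \<epsilon>_lim] by simp
  then have "Cauchy Z"
    by (rule Cauchy_if_sq_dist_le) (use close in \<open>simp add: algebra_simps\<close>)
  then obtain z where Zz: "Z \<longlonglongrightarrow> z"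
    using Cauchy_convergent convergent_def by blast
  have "(\<lambda>k. C k + (norm (Z k))\<^sup>2 / 2) \<longlonglongrightarrow> m"
  proof (rule tendsto_sandwich)
    show "\<forall>\<^sub>F k in sequentially. m \<le> C k + (norm (Z k))\<^sup>2 / 2"
      using m_le[OF PZ] by simp
    show "\<forall>\<^sub>F k in sequentially. C k + (norm (Z k))\<^sup>2 / 2 \<le> m + \<epsilon> k"
      using near by (simp add: less_imp_le)
    show "(\<lambda>k. m + \<epsilon> k) \<longlonglongrightarrow> m"
      using tendsto_add[OF tendsto_const \<epsilon>_lim] by simp
  qed simp
  moreover have "(\<lambda>k. (norm (Z k))\<^sup>2 / 2) \<longlonglongrightarrow> (norm z)\<^sup>2 / 2"
    by (intro tendsto_intros Zz) simp
  ultimately have "C \<longlonglongrightarrow> m - (norm z)\<^sup>2 / 2"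
    using tendsto_diff by fastforce
  then have "P z (m - (norm z)\<^sup>2 / 2)"
    using closed[OF PZ Zz] by blast
  then show ?thesis
    using m_le by force
qed

lemma minimiser_variational_ineq:
  fixes P :: "'a::real_inner \<Rightarrow> real \<Rightarrow> bool"
  assumes convex: "\<And>z c w d t. P z c \<Longrightarrow> P w d \<Longrightarrow> 0 \<le> t \<Longrightarrow> t \<le> 1 \<Longrightarrow>
      P ((1 - t) *\<^sub>R z + t *\<^sub>R w) ((1 - t) * c + t * d)"
    and "P z c" and min: "\<forall>w d. P w d \<longrightarrow> c + (norm z)\<^sup>2 / 2 \<le> d + (norm w)\<^sup>2 / 2"
    and "P w d"
  shows "0 \<le> d - c + inner z (w - z)"
proof (rule nonneg_of_small_perturbations)
  fix t :: real assume "0 < t" "t \<le> 1"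
  have "z + t *\<^sub>R (w - z) = (1 - t) *\<^sub>R z + t *\<^sub>R w"
    by (simp add: algebra_simps)
  then have "c + (norm z)\<^sup>2 / 2 \<le> ((1 - t) * c + t * d) + (norm (z + t *\<^sub>R (w - z)))\<^sup>2 / 2"
    using min convex[OF \<open>P z c\<close> \<open>P w d\<close>] \<open>0 < t\<close> \<open>t \<le> 1\<close> by simp
  also have "\<dots> = c + (norm z)\<^sup>2 / 2 + t * ((d - c + inner z (w - z)) + t * ((norm (w - z))\<^sup>2 / 2))"
    by (simp add: power2_norm_eq_inner inner_add_left inner_add_right inner_diff_left
        inner_diff_right inner_commute field_simps)
  finally show "0 \<le> (d - c + inner z (w - z)) + t * ((norm (w - z))\<^sup>2 / 2)"
    using \<open>0 < t\<close> by (simp add: zero_le_mult_iff)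
qed

lemma min_norm_variational_ineq:
  fixes S :: "'a::real_inner set"
  assumes "convex S" and "p \<in> S" and "\<forall>y\<in>S. norm p \<le> norm y" and "y \<in> S"
  shows "0 \<le> inner p (y - p)"
proof -
  have "0 \<le> 0 - 0 + inner p (y - p)"
  proof (rule minimiser_variational_ineq[where P = "\<lambda>z c. z \<in> S \<and> c = 0"])
    show "(1 - t) *\<^sub>R z + t *\<^sub>R w \<in> S \<and> (1 - t) * c + t * d = 0"
      if "z \<in> S \<and> c = 0" "w \<in> S \<and> d = 0" "0 \<le> t" "t \<le> 1" for z w and c d t :: real
      using that convexD[OF \<open>convex S\<close>] by simp
    show "\<forall>w d. w \<in> S \<and> d = 0 \<longrightarrow> 0 + (norm p)\<^sup>2 / 2 \<le> d + (norm w)\<^sup>2 / 2"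
      using assms(3) by (auto intro: power_mono)
  qed (use assms in auto)
  then show ?thesis by simp
qed

lemma exists_min_norm:
  fixes S :: "'a::{real_inner,complete_space} set"
  assumes "closed S" and "convex S" and "S \<noteq> {}"
  shows "\<exists>p\<in>S. \<forall>y\<in>S. norm p \<le> norm y"
proof -
  obtain s where "s \<in> S" using \<open>S \<noteq> {}\<close> by blast
  have "\<exists>z c. (z \<in> S \<and> c = 0) \<and>
      (\<forall>w d. w \<in> S \<and> d = 0 \<longrightarrow> c + (norm z)\<^sup>2 / 2 \<le> d + (norm w)\<^sup>2 / 2)"
  proof (rule exists_minimiser_plus_half_sq_norm[where L = 0])
    show "s \<in> S \<and> (0::real) = 0" using \<open>s \<in> S\<close> by simp
    show "z \<in> S \<and> c = 0 \<Longrightarrow> 0 \<le> c + (norm z)\<^sup>2 / 2" for z and c :: real by simp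
    show "(1/2) *\<^sub>R (z + w) \<in> S \<and> (c + d) / 2 = 0"
      if "z \<in> S \<and> c = 0" "w \<in> S \<and> d = 0" for z w and c d :: real
      using that convexD[OF \<open>convex S\<close>, of z w "1/2" "1/2"] by (simp add: scaleR_add_right)
    show "z \<in> S \<and> c = 0"
      if "\<And>k. Z k \<in> S \<and> C k = 0" "Z \<longlonglongrightarrow> z" "C \<longlonglongrightarrow> c" for Z C z and c :: real
    proof
      show "z \<in> S" using that closed_sequentially[OF \<open>closed S\<close>] by blast
      have "C = (\<lambda>_. 0)" using that(1) by auto
      then show "c = 0" using that(3) LIMSEQ_unique tendsto_const by metis
    qed
  qed
  then show ?thesis by (auto intro: power2_le_imp_le)
qed

lemma proj_zero_eqI:
  fixes S :: "'a::real_inner set"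
  assumes "convex S" and "p \<in> S" and "\<forall>y\<in>S. norm p \<le> norm y"
  shows "proj S 0 = p"
  unfolding proj_def
proof (rule the_equality)
  show "p \<in> S \<and> (\<forall>y\<in>S. norm (0 - p) \<le> norm (0 - y))" using assms by simp
  fix q assume "q \<in> S \<and> (\<forall>y\<in>S. norm (0 - q) \<le> norm (0 - y))"
  then have "q \<in> S" "\<forall>y\<in>S. norm q \<le> norm y" by auto
  then have "0 \<le> inner p (q - p)" "0 \<le> inner q (p - q)"
    using assms min_norm_variational_ineq by blast+
  then have "inner (q - p) (q - p) \<le> 0"
    by (simp add: inner_diff_left inner_diff_right inner_commute)
  then show "q = p" by (metis inner_gt_zero_iff not_le right_minus_eq)
qed

lemma proj_zero_min_norm:
  fixes S :: "'a::{real_inner,complete_space} set"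
  assumes "closed S" and "convex S" and "S \<noteq> {}"
  shows "proj S 0 \<in> S" and "\<forall>y\<in>S. norm (proj S 0) \<le> norm y"
  using exists_min_norm[OF assms] proj_zero_eqI[OF \<open>convex S\<close>] by auto

lemma proj_closure_zero_le:
  fixes S :: "'a::{real_inner,complete_space} set"
  assumes "convex (closure S)" and "s \<in> S"
  shows "norm (proj (closure S) 0) \<le> norm s"
proof -
  have "s \<in> closure S" and "S \<noteq> {}"
    using assms(2) closure_subset by auto
  then show ?thesis
    using proj_zero_min_norm(2)[OF closed_closure assms(1)] by auto
qed

section \<open>Maximally monotone operators\<close>

lemma maximally_monotoneD:
  "maximally_monotone A \<Longrightarrow> u \<in> A x \<Longrightarrow> w \<in> A y \<Longrightarrow> 0 \<le> inner (x - y) (u - w)"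
  by (auto simp: maximally_monotone_def monotone_op_def)

lemma maximally_monotone_maximal:
  assumes mm: "maximally_monotone A" and rel: "\<And>y w. w \<in> A y \<Longrightarrow> 0 \<le> inner (x - y) (u - w)"
  shows "u \<in> A x"
proof -
  define B where "B = A(x := insert u (A x))"
  have graph_B: "w \<in> B y \<longleftrightarrow> w \<in> A y \<or> (y = x \<and> w = u)" for y w
    by (auto simp: B_def)
  have rel': "0 \<le> inner (y - x) (w - u)" if "w \<in> A y" for y w
    using rel[OF that] by (metis inner_minus_left inner_minus_right minus_diff_eq)
  have "monotone_op A"
    using mm by (simp add: maximally_monotone_def)
  then have "monotone_op B"
    using rel rel' unfolding monotone_op_def graph_B by auto
  moreover have "\<forall>y. A y \<subseteq> B y"
    by (auto simp: B_def)
  ultimately have "B = A"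
    using mm by (simp add: maximally_monotone_def)
  then show "u \<in> A x"
    using graph_B by blast
qed

lemma maximally_monotoneI:
  assumes "monotone_op A"
    and max: "\<And>x u. (\<And>y w. w \<in> A y \<Longrightarrow> 0 \<le> inner (x - y) (u - w)) \<Longrightarrow> u \<in> A x"
  shows "maximally_monotone A"
  unfolding maximally_monotone_def
proof (intro conjI allI impI)
  fix B assume B: "monotone_op B \<and> (\<forall>x. A x \<subseteq> B x)"
  show "B = A"
  proof (intro ext equalityI subsetI)
    fix x u assume "u \<in> B x"
    have "0 \<le> inner (x - y) (u - w)" if "w \<in> A y" for y w
      using B \<open>u \<in> B x\<close> that unfolding monotone_op_def by blast
    then show "u \<in> A x" by (rule max)
  next
    show "u \<in> B x" if "u \<in> A x" for x u
      using B that by blast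
  qed
qed fact

lemma maximally_monotone_graph_nonempty:
  assumes "maximally_monotone A" shows "\<exists>x u. u \<in> A x"
proof (rule ccontr)
  assume empty: "\<nexists>x u. u \<in> A x"
  then have "(0::'a) \<in> A 0"
    by (intro maximally_monotone_maximal[OF assms]) auto
  with empty show False by blast
qed

text \<open>The epigraph of the Fitzpatrick function
  \<open>F\<^sub>A(x, u) = sup {\<langle>x, a'\<rangle> + \<langle>a, u\<rangle> - \<langle>a, a'\<rangle> | a' \<in> A a}\<close>;
  working with the epigraph avoids the value \<open>+\<infinity>\<close>.\<close>

definition fitzpatrick_epi :: "('a::real_inner \<Rightarrow> 'a set) \<Rightarrow> 'a \<times> 'a \<Rightarrow> real \<Rightarrow> bool" where
  "fitzpatrick_epi A z c \<longleftrightarrow>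
     (\<forall>a a'. a' \<in> A a \<longrightarrow> inner (fst z) a' + inner a (snd z) - inner a a' \<le> c)"

lemma fitzpatrick_epi_graph:
  assumes "maximally_monotone A" and "a' \<in> A a"
  shows "fitzpatrick_epi A (a, a') (inner a a')"
  unfolding fitzpatrick_epi_def
proof (intro allI impI)
  fix b b' assume "b' \<in> A b"
  from maximally_monotoneD[OF assms this]
  show "inner (fst (a, a')) b' + inner b (snd (a, a')) - inner b b' \<le> inner a a'"
    by (simp add: inner_diff_left inner_diff_right inner_commute)
qed

lemma fitzpatrick_epi_inner_le:
  assumes mm: "maximally_monotone A" and epi: "fitzpatrick_epi A (x, u) c"
  shows "inner x u \<le> c"
proof (rule ccontr)
  assume "\<not> inner x u \<le> c"
  then have "u \<in> A x"
    using epi by (intro maximally_monotone_maximal[OF mm])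
      (fastforce simp: fitzpatrick_epi_def inner_diff_left inner_diff_right inner_commute)
  with epi \<open>\<not> inner x u \<le> c\<close> show False
    unfolding fitzpatrick_epi_def by fastforce
qed

lemma fitzpatrick_epi_convex:
  assumes "fitzpatrick_epi A z c" and "fitzpatrick_epi A w d" and "0 \<le> t" and "t \<le> 1"
  shows "fitzpatrick_epi A ((1 - t) *\<^sub>R z + t *\<^sub>R w) ((1 - t) * c + t * d)"
  unfolding fitzpatrick_epi_def
proof (intro allI impI)
  fix a a' assume "a' \<in> A a"
  let ?\<phi> = "\<lambda>z. inner (fst z) a' + inner a (snd z) - inner a a'"
  have "(1 - t) * ?\<phi> z \<le> (1 - t) * c" "t * ?\<phi> w \<le> t * d"
    using assms \<open>a' \<in> A a\<close> by (auto intro!: mult_left_mono simp: fitzpatrick_epi_def)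
  then show "?\<phi> ((1 - t) *\<^sub>R z + t *\<^sub>R w) \<le> (1 - t) * c + t * d"
    by (simp add: inner_add_left inner_add_right algebra_simps)
qed

lemma fitzpatrick_epi_closed:
  assumes "\<And>k. fitzpatrick_epi A (Z k) (C k)" and "Z \<longlonglongrightarrow> z" and "C \<longlonglongrightarrow> c"
  shows "fitzpatrick_epi A z c"
  unfolding fitzpatrick_epi_def
proof (intro allI impI)
  fix a a' assume "a' \<in> A a"
  have "(\<lambda>k. inner (fst (Z k)) a' + inner a (snd (Z k)) - inner a a')
      \<longlonglongrightarrow> inner (fst z) a' + inner a (snd z) - inner a a'"
    by (intro tendsto_intros assms(2))
  then show "inner (fst z) a' + inner a (snd z) - inner a a' \<le> c"
    by (rule LIMSEQ_le[OF _ assms(3)]) (use assms(1) \<open>a' \<in> A a\<close> in \<open>auto simp: fitzpatrick_epi_def\<close>)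
qed

lemma fitzpatrick_epi_lower_bound:
  assumes "maximally_monotone A" and "fitzpatrick_epi A z c"
  shows "0 \<le> c + (norm z)\<^sup>2 / 2"
proof -
  obtain x u where z: "z = (x, u)" by fastforce
  have "inner x u \<le> c"
    using fitzpatrick_epi_inner_le assms z by blast
  moreover have "(norm z)\<^sup>2 = (norm x)\<^sup>2 + (norm u)\<^sup>2"
    by (simp add: z power2_norm_eq_inner inner_prod_def)
  moreover have "0 \<le> (norm (x + u))\<^sup>2" by simp
  moreover have "(norm (x + u))\<^sup>2 = (norm x)\<^sup>2 + (norm u)\<^sup>2 + 2 * inner x u"
    by (simp add: power2_norm_eq_inner inner_add_left inner_add_right inner_commute)
  ultimately show ?thesis by linarith
qed

text \<open>Minty's theorem via the Fitzpatrick function.\<close>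

lemma fitzpatrick_minimiser_neg_mem:
  assumes mm: "maximally_monotone A" and epi: "fitzpatrick_epi A (x, u) c"
    and min: "\<forall>w d. fitzpatrick_epi A w d \<longrightarrow> c + (norm (x, u))\<^sup>2 / 2 \<le> d + (norm w)\<^sup>2 / 2"
  shows "u = - x" and "u \<in> A x"
proof -
  have "fitzpatrick_epi A (- u, - x) (- c - (norm x)\<^sup>2 - (norm u)\<^sup>2)"
    unfolding fitzpatrick_epi_def
  proof (intro allI impI)
    fix b b' assume "b' \<in> A b"
    have "0 \<le> inner b b' - c + inner (x, u) ((b, b') - (x, u))"
      using minimiser_variational_ineq[OF fitzpatrick_epi_convex epi min
          fitzpatrick_epi_graph[OF mm \<open>b' \<in> A b\<close>]] .
    then show "inner (fst (- u, - x)) b' + inner b (snd (- u, - x)) - inner b b'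
        \<le> - c - (norm x)\<^sup>2 - (norm u)\<^sup>2"
      by (simp add: inner_prod_def inner_diff_left inner_diff_right inner_commute
          power2_norm_eq_inner)
  qed
  then have "inner u x \<le> - c - (norm x)\<^sup>2 - (norm u)\<^sup>2"
    using fitzpatrick_epi_inner_le[OF mm] by fastforce
  moreover have "inner x u \<le> c"
    using fitzpatrick_epi_inner_le[OF mm epi] .
  moreover have "(norm (x + u))\<^sup>2 = (norm x)\<^sup>2 + (norm u)\<^sup>2 + 2 * inner x u"
    by (simp add: power2_norm_eq_inner inner_add_left inner_add_right inner_commute)
  ultimately have "(norm (x + u))\<^sup>2 \<le> 0" and c_le: "c \<le> inner x u - (norm (x + u))\<^sup>2"
    by (simp_all add: inner_commute)
  then show u: "u = - x"
    by (simp add: add_eq_0_iff2)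
  show "u \<in> A x"
  proof (rule maximally_monotone_maximal[OF mm])
    fix y w assume "w \<in> A y"
    then have "inner x w + inner y u - inner y w \<le> c"
      using epi by (auto simp: fitzpatrick_epi_def)
    with c_le u show "0 \<le> inner (x - y) (u - w)"
      by (simp add: inner_diff_left inner_diff_right inner_commute)
  qed
qed

lemma maximally_monotone_ex_neg_mem:
  fixes A :: "'a::{real_inner,complete_space} \<Rightarrow> 'a set"
  assumes mm: "maximally_monotone A"
  shows "\<exists>p. - p \<in> A p"
proof -
  obtain a a' where "a' \<in> A a"
    using maximally_monotone_graph_nonempty[OF mm] by blast
  have "\<exists>z c. fitzpatrick_epi A z c \<and>
      (\<forall>w d. fitzpatrick_epi A w d \<longrightarrow> c + (norm z)\<^sup>2 / 2 \<le> d + (norm w)\<^sup>2 / 2)"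
  proof (rule exists_minimiser_plus_half_sq_norm[where L = 0])
    show "fitzpatrick_epi A (a, a') (inner a a')"
      using fitzpatrick_epi_graph[OF mm \<open>a' \<in> A a\<close>] .
    show "fitzpatrick_epi A ((1/2) *\<^sub>R (z + w)) ((c + d) / 2)"
      if "fitzpatrick_epi A z c" "fitzpatrick_epi A w d" for z w c d
      using fitzpatrick_epi_convex[OF that, of "1/2"] by (simp add: scaleR_add_right add_divide_distrib)
    show "0 \<le> c + (norm z)\<^sup>2 / 2" if "fitzpatrick_epi A z c" for z c
      using fitzpatrick_epi_lower_bound[OF mm that] .
  qed (rule fitzpatrick_epi_closed)
  then obtain x u c where "fitzpatrick_epi A (x, u) c"
    and "\<forall>w d. fitzpatrick_epi A w d \<longrightarrow> c + (norm (x, u))\<^sup>2 / 2 \<le> d + (norm w)\<^sup>2 / 2"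
    by auto
  then show ?thesis
    using fitzpatrick_minimiser_neg_mem[OF mm] by (metis minus_minus)
qed

lemma maximally_monotone_scale_shift:
  assumes mm: "maximally_monotone A" and "0 < l"
  shows "maximally_monotone (\<lambda>x. (\<lambda>u. l *\<^sub>R u + c) ` A x)"
proof (rule maximally_monotoneI)
  show "monotone_op (\<lambda>x. (\<lambda>u. l *\<^sub>R u + c) ` A x)"
    unfolding monotone_op_def
    using maximally_monotoneD[OF mm] \<open>0 < l\<close>
    by (auto simp: scaleR_diff_right[symmetric])
next
  fix x u
  assume rel: "\<And>y w. w \<in> (\<lambda>u. l *\<^sub>R u + c) ` A y \<Longrightarrow> 0 \<le> inner (x - y) (u - w)"
  have "(1/l) *\<^sub>R (u - c) \<in> A x"
  proof (rule maximally_monotone_maximal[OF mm])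
    fix y w assume "w \<in> A y"
    then have "0 \<le> inner (x - y) (u - (l *\<^sub>R w + c))"
      by (intro rel imageI)
    also have "\<dots> = l * inner (x - y) ((1/l) *\<^sub>R (u - c) - w)"
      using \<open>0 < l\<close> by (simp add: inner_diff_right algebra_simps)
    finally show "0 \<le> inner (x - y) ((1/l) *\<^sub>R (u - c) - w)"
      using \<open>0 < l\<close> by (simp add: zero_le_mult_iff)
  qed
  moreover have "u = l *\<^sub>R ((1/l) *\<^sub>R (u - c)) + c"
    using \<open>0 < l\<close> by simp
  ultimately show "u \<in> (\<lambda>u. l *\<^sub>R u + c) ` A x"
    by (rule rev_image_eqI)
qed

lemma maximally_monotone_surj:
  fixes A :: "'a::{real_inner,complete_space} \<Rightarrow> 'a set"
  assumes "maximally_monotone A" and "0 < l"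
  shows "\<exists>p. \<exists>w\<in>A p. x = p + l *\<^sub>R w"
proof -
  obtain p where "- p \<in> (\<lambda>u. l *\<^sub>R u - x) ` A p"
    using maximally_monotone_ex_neg_mem[OF maximally_monotone_scale_shift[OF assms, of "- x"]]
    by auto
  then show ?thesis
    by (force simp: algebra_simps)
qed

lemma resolvent_mem:
  fixes A :: "'a::{real_inner,complete_space} \<Rightarrow> 'a set"
  assumes mm: "maximally_monotone A"
  shows "x - resolvent A x \<in> A (resolvent A x)"
  unfolding resolvent_def
proof (rule theI')
  show "\<exists>!p. x - p \<in> A p"
  proof (rule ex_ex1I)
    obtain p w where "w \<in> A p" "x = p + 1 *\<^sub>R w"
      using maximally_monotone_surj[OF mm zero_less_one] by blast
    then show "\<exists>p. x - p \<in> A p" by (intro exI[of _ p]) simp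
  next
    fix p q assume "x - p \<in> A p" "x - q \<in> A q"
    from maximally_monotoneD[OF mm this] have "inner (p - q) (p - q) \<le> 0"
      by (simp add: inner_diff_left inner_diff_right inner_commute)
    then show "p = q"
      by (metis inner_gt_zero_iff not_le right_minus_eq)
  qed
qed

lemma resolvent_mem_dom_op:
  fixes A :: "'a::{real_inner,complete_space} \<Rightarrow> 'a set"
  assumes "maximally_monotone A"
  shows "resolvent A x \<in> dom_op A"
  using resolvent_mem[OF assms] by (auto simp: dom_op_def)

lemma resolvent_firmly_nonexpansive:
  fixes A :: "'a::{real_inner,complete_space} \<Rightarrow> 'a set"
  assumes mm: "maximally_monotone A"
  shows "(norm (resolvent A x - resolvent A y))\<^sup>2 \<le> inner (resolvent A x - resolvent A y) (x - y)"
  using maximally_monotoneD[OF mm resolvent_mem[OF mm] resolvent_mem[OF mm], of x y]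
  by (simp add: power2_norm_eq_inner inner_diff_left inner_diff_right inner_commute)

lemma resolvent_nonexpansive:
  fixes A :: "'a::{real_inner,complete_space} \<Rightarrow> 'a set"
  assumes mm: "maximally_monotone A"
  shows "norm (resolvent A x - resolvent A y) \<le> norm (x - y)"
proof -
  have "(norm (resolvent A x - resolvent A y))\<^sup>2 \<le> norm (resolvent A x - resolvent A y) * norm (x - y)"
    using resolvent_firmly_nonexpansive[OF mm] norm_cauchy_schwarz order_trans by blast
  then show ?thesis
    by (cases "resolvent A x = resolvent A y") (auto simp: power2_eq_square mult_le_cancel_left)
qed

lemma reflected_resolvent_nonexpansive:
  fixes A :: "'a::{real_inner,complete_space} \<Rightarrow> 'a set"
  assumes mm: "maximally_monotone A"
  shows "norm (reflected_resolvent A x - reflected_resolvent A y) \<le> norm (x - y)"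
proof -
  define d where "d = resolvent A x - resolvent A y"
  have "(norm (reflected_resolvent A x - reflected_resolvent A y))\<^sup>2
      = (norm (x - y))\<^sup>2 - 4 * (inner d (x - y) - (norm d)\<^sup>2)"
    by (simp add: reflected_resolvent_def d_def power2_norm_eq_inner inner_diff_left
        inner_diff_right inner_commute algebra_simps)
  also have "\<dots> \<le> (norm (x - y))\<^sup>2"
    using resolvent_firmly_nonexpansive[OF mm] by (simp add: d_def)
  finally show ?thesis
    by (rule power2_le_imp_le) simp
qed

definition converse_op :: "('a \<Rightarrow> 'a set) \<Rightarrow> 'a \<Rightarrow> 'a set" where
  "converse_op A u = {x. u \<in> A x}"

lemma dom_op_converse_op: "dom_op (converse_op A) = ran_op A"
  by (auto simp: dom_op_def ran_op_def converse_op_def)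

lemma maximally_monotone_converse_op:
  assumes mm: "maximally_monotone A"
  shows "maximally_monotone (converse_op A)"
proof (rule maximally_monotoneI)
  show "monotone_op (converse_op A)"
    using maximally_monotoneD[OF mm] by (simp add: monotone_op_def converse_op_def inner_commute)
next
  fix u x assume rel: "\<And>v y. y \<in> converse_op A v \<Longrightarrow> 0 \<le> inner (u - v) (x - y)"
  have "u \<in> A x"
    by (rule maximally_monotone_maximal[OF mm])
      (use rel in \<open>auto simp: converse_op_def inner_commute\<close>)
  then show "x \<in> converse_op A u"
    by (simp add: converse_op_def)
qed

lemma maximally_monotone_segment_inner_le:
  assumes mm: "maximally_monotone A" and "w \<in> A y" and "p' \<in> A p" and "q' \<in> A q"
    and "0 \<le> t" and "t \<le> 1" and x: "x = (1 - t) *\<^sub>R p + t *\<^sub>R q"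
  shows "inner (x - y) w
    \<le> (norm p' + norm q') * norm (y - x) + norm (x - p) * norm p' + norm (x - q) * norm q'"
proof -
  have bound: "inner (a - y) w \<le> (norm (y - x) + norm (x - a)) * norm a'" if "a' \<in> A a" for a a'
  proof -
    have "inner (a - y) w \<le> inner (a - y) a'"
      using maximally_monotoneD[OF mm \<open>w \<in> A y\<close> that] by (simp add: inner_diff_left inner_diff_right)
    also have "\<dots> \<le> norm (y - a) * norm a'"
      using norm_cauchy_schwarz[of "a - y" a'] by (simp add: norm_minus_commute)
    also have "\<dots> \<le> (norm (y - x) + norm (x - a)) * norm a'"
      using norm_triangle_ineq[of "y - x" "x - a"] by (simp add: mult_right_mono)
    finally show ?thesis .
  qed
  have "inner (x - y) w = (1 - t) * inner (p - y) w + t * inner (q - y) w"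
    by (simp add: x inner_diff_left inner_add_left algebra_simps)
  also have "\<dots> \<le> (norm p' + norm q') * norm (y - x) + norm (x - p) * norm p' + norm (x - q) * norm q'"
  proof (rule convex_bound_le)
    have "(norm p' + norm q') * norm (y - x) + norm (x - p) * norm p' + norm (x - q) * norm q'
        = (norm (y - x) + norm (x - p)) * norm p' + (norm (y - x) + norm (x - q)) * norm q'"
      by (simp add: algebra_simps)
    moreover have "0 \<le> (norm (y - x) + norm (x - p)) * norm p'"
      "0 \<le> (norm (y - x) + norm (x - q)) * norm q'"
      by simp_all
    ultimately show "inner (p - y) w
        \<le> (norm p' + norm q') * norm (y - x) + norm (x - p) * norm p' + norm (x - q) * norm q'"
      "inner (q - y) w
        \<le> (norm p' + norm q') * norm (y - x) + norm (x - p) * norm p' + norm (x - q) * norm q'"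
      using bound[OF \<open>p' \<in> A p\<close>] bound[OF \<open>q' \<in> A q\<close>] by linarith+
  qed (use \<open>0 \<le> t\<close> \<open>t \<le> 1\<close> in auto)
  finally show ?thesis .
qed

lemma convex_closure_dom_op:
  fixes A :: "'a::{real_inner,complete_space} \<Rightarrow> 'a set"
  assumes mm: "maximally_monotone A"
  shows "convex (closure (dom_op A))"
proof (rule convex_closure_if_segments)
  fix p q and t :: real
  assume "p \<in> dom_op A" "q \<in> dom_op A" "0 \<le> t" "t \<le> 1"
  then obtain p' q' where "p' \<in> A p" "q' \<in> A q"
    by (auto simp: dom_op_def)
  define x where "x = (1 - t) *\<^sub>R p + t *\<^sub>R q"
  define K where "K = norm p' + norm q'"
  define M where "M = norm (x - p) * norm p' + norm (x - q) * norm q'"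
  \<comment> \<open>The resolvents \<open>J\<^sub>l\<^sub>A x\<close> lie in the domain and tend to \<open>x\<close> as \<open>l \<rightarrow> 0\<close>.\<close>
  have "x \<in> closure (dom_op A)"
  proof (rule mem_closure_if_quadratic_approx)
    show "0 \<le> K" "0 \<le> M" by (simp_all add: K_def M_def)
    fix l :: real assume "0 < l"
    obtain y w where "w \<in> A y" and "x = y + l *\<^sub>R w"
      using maximally_monotone_surj[OF mm \<open>0 < l\<close>] by blast
    then have "(norm (y - x))\<^sup>2 = l * inner (x - y) w"
      unfolding power2_norm_eq_inner by simp
    also have "\<dots> \<le> l * (K * norm (y - x) + M)"
      using maximally_monotone_segment_inner_le[OF mm \<open>w \<in> A y\<close> \<open>p' \<in> A p\<close> \<open>q' \<in> A q\<close>
          \<open>0 \<le> t\<close> \<open>t \<le> 1\<close> x_def] \<open>0 < l\<close>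
      by (intro mult_left_mono) (simp_all add: K_def M_def add.assoc)
    finally show "\<exists>y\<in>dom_op A. (norm (y - x))\<^sup>2 \<le> l * K * norm (y - x) + l * M"
      using \<open>w \<in> A y\<close> by (auto simp: dom_op_def algebra_simps)
  qed
  then show "(1 - t) *\<^sub>R p + t *\<^sub>R q \<in> closure (dom_op A)"
    by (simp add: x_def)
qed

lemma convex_closure_ran_op:
  fixes A :: "'a::{real_inner,complete_space} \<Rightarrow> 'a set"
  assumes "maximally_monotone A"
  shows "convex (closure (ran_op A))"
  using convex_closure_dom_op[OF maximally_monotone_converse_op[OF assms]]
  by (simp add: dom_op_converse_op)

text \<open>The points \<open>y - l p \<in> B p\<close> with \<open>y = b' + u\<close>, supplied by Minty's theorem, tend to \<open>y\<close>
  as \<open>l \<rightarrow> 0\<close>: the bound on \<open>\<langle>u, \<cdot>\<rangle>\<close> over \<open>dom B\<close> controls \<open>l\<parallel>p\<parallel>\<close>.\<close>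

lemma ran_op_shift_mem_closure:
  fixes B :: "'a::{real_inner,complete_space} \<Rightarrow> 'a set"
  assumes mm: "maximally_monotone B" and "b' \<in> B b"
    and bdd: "\<And>c. c \<in> dom_op B \<Longrightarrow> inner u c \<le> \<sigma>"
  shows "b' + u \<in> closure (ran_op B)"
proof (rule mem_closure_if_quadratic_approx)
  define M where "M = \<bar>\<sigma>\<bar> + norm b * norm u"
  show "0 \<le> norm b" "0 \<le> M" by (simp_all add: M_def)
  fix l :: real assume "0 < l"
  obtain p w where "w \<in> B p" and "(1/l) *\<^sub>R (b' + u) = p + (1/l) *\<^sub>R w"
    using maximally_monotone_surj[OF mm, of "1/l" "(1/l) *\<^sub>R (b' + u)"] \<open>0 < l\<close> by auto
  then have "l *\<^sub>R ((1/l) *\<^sub>R (b' + u)) = l *\<^sub>R (p + (1/l) *\<^sub>R w)"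
    by simp
  then have w: "w = b' + u - l *\<^sub>R p"
    using \<open>0 < l\<close> by (simp add: scaleR_add_right algebra_simps)
  have "l * (norm p)\<^sup>2 \<le> inner u p - inner b u + l * inner b p"
    using maximally_monotoneD[OF mm \<open>w \<in> B p\<close> \<open>b' \<in> B b\<close>]
    by (simp add: w power2_norm_eq_inner inner_diff_left inner_diff_right inner_commute algebra_simps)
  also have "\<dots> \<le> M + l * (norm b * norm p)"
  proof -
    have "inner u p \<le> \<sigma>"
      using bdd \<open>w \<in> B p\<close> by (auto simp: dom_op_def)
    moreover have "- inner b u \<le> norm b * norm u"
      using norm_cauchy_schwarz[of "- b" u] by simp
    moreover have "l * inner b p \<le> l * (norm b * norm p)"
      using \<open>0 < l\<close> norm_cauchy_schwarz[of b p] by simp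
    ultimately show ?thesis by (simp add: M_def)
  qed
  finally have "l * (l * (norm p)\<^sup>2) \<le> l * (M + l * (norm b * norm p))"
    using \<open>0 < l\<close> by simp
  moreover have "norm (w - (b' + u)) = l * norm p"
    using \<open>0 < l\<close> by (simp add: w)
  ultimately have "(norm (w - (b' + u)))\<^sup>2 \<le> l * norm b * norm (w - (b' + u)) + l * M"
    by (simp add: power2_eq_square algebra_simps)
  with \<open>w \<in> B p\<close> show "\<exists>y\<in>ran_op B. (norm (y - (b' + u)))\<^sup>2 \<le> l * norm b * norm (y - (b' + u)) + l * M"
    by (auto simp: ran_op_def)
qed

section \<open>The Douglas--Rachford operator\<close>

lemma DR_op_double:
  "2 *\<^sub>R DR_op A B x = x + reflected_resolvent B (reflected_resolvent A x)"
  by (simp add: DR_op_def reflected_resolvent_def scaleR_2 algebra_simps)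

lemma DR_op_firmly_nonexpansive:
  fixes A B :: "'a::{real_inner,complete_space} \<Rightarrow> 'a set"
  assumes "maximally_monotone A" and "maximally_monotone B"
  shows "(norm (DR_op A B x - DR_op A B y))\<^sup>2 + (norm ((x - DR_op A B x) - (y - DR_op A B y)))\<^sup>2
           \<le> (norm (x - y))\<^sup>2"
proof -
  define N where "N z = reflected_resolvent B (reflected_resolvent A z)" for z
  define e where "e = x - y"
  define n where "n = N x - N y"
  have two: "2 *\<^sub>R (DR_op A B x - DR_op A B y) = e + n"
    "2 *\<^sub>R ((x - DR_op A B x) - (y - DR_op A B y)) = e - n"
    by (simp_all only: scaleR_diff_right DR_op_double N_def[symmetric])
      (simp_all add: scaleR_2 e_def n_def algebra_simps)
  then have "(norm (e + n))\<^sup>2 = 4 * (norm (DR_op A B x - DR_op A B y))\<^sup>2"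
    and "(norm (e - n))\<^sup>2 = 4 * (norm ((x - DR_op A B x) - (y - DR_op A B y)))\<^sup>2"
    by (simp_all add: two[symmetric] power_mult_distrib)
  moreover have "(norm (e + n))\<^sup>2 + (norm (e - n))\<^sup>2 = 2 * (norm e)\<^sup>2 + 2 * (norm n)\<^sup>2"
    by (simp add: power2_norm_eq_inner inner_add_left inner_add_right inner_diff_left
        inner_diff_right inner_commute)
  moreover have "norm n \<le> norm e"
    unfolding n_def N_def e_def
    using reflected_resolvent_nonexpansive[OF assms(2)] reflected_resolvent_nonexpansive[OF assms(1)]
    by (rule order_trans)
  then have "(norm n)\<^sup>2 \<le> (norm e)\<^sup>2"
    by (simp add: power_mono)
  ultimately show ?thesis
    unfolding e_def by linarith
qed

lemma DR_op_nonexpansive: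
  fixes A B :: "'a::{real_inner,complete_space} \<Rightarrow> 'a set"
  assumes "maximally_monotone A" and "maximally_monotone B"
  shows "norm (DR_op A B x - DR_op A B y) \<le> norm (x - y)"
proof (rule power2_le_imp_le)
  show "(norm (DR_op A B x - DR_op A B y))\<^sup>2 \<le> (norm (x - y))\<^sup>2"
    using DR_op_firmly_nonexpansive[OF assms, of x y]
      zero_le_power2[of "norm ((x - DR_op A B x) - (y - DR_op A B y))"] by linarith
qed simp

lemma funpow_nonexpansive:
  fixes T :: "'a::real_normed_vector \<Rightarrow> 'a"
  assumes "\<And>x y. norm (T x - T y) \<le> norm (x - y)"
  shows "norm ((T ^^ n) x - (T ^^ n) y) \<le> norm (x - y)"
proof (induction n)
  case (Suc n)
  then show ?case
    using assms[of "(T ^^ n) x" "(T ^^ n) y"] by simp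
qed simp

text \<open>Firm nonexpansiveness and minimality of \<open>\<parallel>v\<parallel>\<close> force the displacement \<open>v\<close> to propagate
  along the orbit: \<open>\<parallel>T z - T (T z)\<parallel>\<^sup>2 + \<parallel>v - (T z - T (T z))\<parallel>\<^sup>2 \<le> \<parallel>v\<parallel>\<^sup>2 \<le> \<parallel>T z - T (T z)\<parallel>\<^sup>2\<close>.\<close>

lemma min_displacement_orbit:
  fixes T :: "'a::real_inner \<Rightarrow> 'a"
  assumes fne: "\<And>x y. (norm (T x - T y))\<^sup>2 + (norm ((x - T x) - (y - T y)))\<^sup>2 \<le> (norm (x - y))\<^sup>2"
    and min: "\<And>y. norm v \<le> norm (y - T y)"
    and "f - T f = v"
  shows "(T ^^ n) f = f - real n *\<^sub>R v" and "(T ^^ n) f - T ((T ^^ n) f) = v"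
proof -
  have step: "T z - T (T z) = v" if "z - T z = v" for z
  proof -
    have "(norm (T z - T (T z)))\<^sup>2 + (norm (v - (T z - T (T z))))\<^sup>2 \<le> (norm v)\<^sup>2"
      using fne[of z "T z"] that by simp
    moreover have "(norm v)\<^sup>2 \<le> (norm (T z - T (T z)))\<^sup>2"
      using min[of "T z"] by (simp add: power_mono)
    ultimately have "(norm (v - (T z - T (T z))))\<^sup>2 \<le> 0"
      by linarith
    then show ?thesis by simp
  qed
  have "(T ^^ n) f - T ((T ^^ n) f) = v \<and> (T ^^ n) f = f - real n *\<^sub>R v"
  proof (induction n)
    case 0
    then show ?case using \<open>f - T f = v\<close> by simp
  next
    case (Suc n)
    then have d: "(T ^^ n) f - T ((T ^^ n) f) = v" and e: "(T ^^ n) f = f - real n *\<^sub>R v"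
      by auto
    have "(T ^^ Suc n) f - T ((T ^^ Suc n) f) = v"
      using step[OF d] by simp
    moreover have "(T ^^ Suc n) f = f - real (Suc n) *\<^sub>R v"
    proof -
      have "(T ^^ Suc n) f = (T ^^ n) f - v"
        using d by (simp add: algebra_simps)
      also have "\<dots> = f - real (Suc n) *\<^sub>R v"
        by (simp add: e algebra_simps)
      finally show ?thesis .
    qed
    ultimately show ?case ..
  qed
  then show "(T ^^ n) f = f - real n *\<^sub>R v" "(T ^^ n) f - T ((T ^^ n) f) = v"
    by blast+
qed

lemma bounded_range_funpow_image:
  fixes T :: "'a::real_normed_vector \<Rightarrow> 'a" and g :: "'a \<Rightarrow> 'b::real_normed_vector"
  assumes T: "\<And>x y. norm (T x - T y) \<le> norm (x - y)"
    and g: "\<And>x y. norm (g x - g y) \<le> norm (x - y)"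
    and "bounded (range (\<lambda>n. g ((T ^^ n) f)))"
  shows "bounded (range (\<lambda>n. g ((T ^^ n) x)))"
proof -
  obtain C where C: "\<And>n. norm (g ((T ^^ n) f)) \<le> C"
    using \<open>bounded (range (\<lambda>n. g ((T ^^ n) f)))\<close> by (auto simp: bounded_iff)
  have "norm (g ((T ^^ n) x)) \<le> C + norm (x - f)" for n
  proof -
    have "norm (g ((T ^^ n) x) - g ((T ^^ n) f)) \<le> norm (x - f)"
      using g order_trans funpow_nonexpansive[OF T] by blast
    then show ?thesis
      using C[of n] norm_triangle_sub[of "g ((T ^^ n) x)" "g ((T ^^ n) f)"] by linarith
  qed
  then show ?thesis
    by (auto simp: bounded_iff)
qed

lemma DR_op_equal_displacement:
  fixes A B :: "'a::{real_inner,complete_space} \<Rightarrow> 'a set"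
  assumes mA: "maximally_monotone A" and mB: "maximally_monotone B"
    and "x - DR_op A B x = y - DR_op A B y"
  shows "inner (resolvent A x - resolvent A y) ((x - resolvent A x) - (y - resolvent A y)) = 0"
proof -
  define a b where "a z = resolvent A z" and "b z = resolvent B (reflected_resolvent A z)" for z
  define \<Delta> where "\<Delta> = a x - a y"
  have b: "b x - b y = \<Delta>"
    using assms(3) by (simp add: DR_op_def a_def b_def \<Delta>_def algebra_simps)
  then have "(reflected_resolvent A x - b x) - (reflected_resolvent A y - b y)
      = - ((x - a x) - (y - a y))"
    by (simp add: reflected_resolvent_def a_def \<Delta>_def scaleR_2 algebra_simps)
  moreover have "0 \<le> inner (b x - b y)
      ((reflected_resolvent A x - b x) - (reflected_resolvent A y - b y))"
    unfolding b_def by (intro maximally_monotoneD[OF mB] resolvent_mem[OF mB])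
  ultimately have "inner \<Delta> ((x - a x) - (y - a y)) \<le> 0"
    by (simp only: b inner_minus_right neg_0_le_iff_le)
  moreover have "0 \<le> inner \<Delta> ((x - a x) - (y - a y))"
    unfolding \<Delta>_def a_def by (intro maximally_monotoneD[OF mA] resolvent_mem[OF mA])
  ultimately show ?thesis
    by (simp add: \<Delta>_def a_def)
qed

lemma convex_closure_dom_diff:
  fixes A B :: "'a::{real_inner,complete_space} \<Rightarrow> 'a set"
  assumes "maximally_monotone A" and "maximally_monotone B"
  shows "convex (closure {a - b | a b. a \<in> dom_op A \<and> b \<in> dom_op B})"
proof -
  have "{a - b | a b. a \<in> dom_op A \<and> b \<in> dom_op B} = dom_op A + (*\<^sub>R) (- 1) ` dom_op B"
    by (force simp: set_plus_def)
  moreover have "convex (closure ((*\<^sub>R) (- 1) ` dom_op B))"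
    unfolding closure_scaleR[symmetric] by (rule convex_scaling[OF convex_closure_dom_op[OF assms(2)]])
  ultimately show ?thesis
    using convex_closure_dom_op[OF assms(1)] by (simp add: convex_closure_set_plus)
qed

lemma convex_closure_ran_sum:
  fixes A B :: "'a::{real_inner,complete_space} \<Rightarrow> 'a set"
  assumes "maximally_monotone A" and "maximally_monotone B"
  shows "convex (closure {a + b | a b. a \<in> ran_op A \<and> b \<in> ran_op B})"
proof -
  have "{a + b | a b. a \<in> ran_op A \<and> b \<in> ran_op B} = ran_op A + ran_op B"
    by (auto simp: set_plus_def)
  then show ?thesis
    using assms by (simp add: convex_closure_set_plus convex_closure_ran_op)
qed

lemma proj_dom_diff_variational_ineq:
  fixes A B :: "'a::{real_inner,complete_space} \<Rightarrow> 'a set"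
  defines "D \<equiv> {a - b | a b. a \<in> dom_op A \<and> b \<in> dom_op B}"
  assumes "maximally_monotone A" and "maximally_monotone B"
    and "a \<in> dom_op A" and "b \<in> dom_op B"
  shows "0 \<le> inner (proj (closure D) 0) (a - b - proj (closure D) 0)"
proof -
  have "a - b \<in> D"
    using assms(4,5) by (auto simp: D_def)
  then have "a - b \<in> closure D"
    using closure_subset by blast
  moreover have "convex (closure D)"
    unfolding D_def using assms(2,3) by (rule convex_closure_dom_diff)
  ultimately show ?thesis
    using min_norm_variational_ineq proj_zero_min_norm[OF closed_closure] by (metis empty_iff)
qed

lemma resolvent_DR_shift_eq:
  fixes A B :: "'a::{real_inner,complete_space} \<Rightarrow> 'a set"
  defines "vD \<equiv> proj (closure {a - b | a b. a \<in> dom_op A \<and> b \<in> dom_op B}) 0"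
  assumes mA: "maximally_monotone A" and mB: "maximally_monotone B"
    and x: "x - DR_op A B x = vD" and y: "y - DR_op A B y = vD"
    and "x = y - t *\<^sub>R vD" and "0 \<le> t"
  shows "resolvent A x = resolvent A y"
proof -
  define \<Delta> where "\<Delta> = resolvent A x - resolvent A y"
  have "inner \<Delta> ((x - resolvent A x) - (y - resolvent A y)) = 0"
    unfolding \<Delta>_def using mA mB by (rule DR_op_equal_displacement) (simp add: x y)
  moreover have "(x - resolvent A x) - (y - resolvent A y) = - (t *\<^sub>R vD) - \<Delta>"
    by (simp add: \<Delta>_def \<open>x = y - t *\<^sub>R vD\<close>)
  ultimately have "t * inner \<Delta> vD + (norm \<Delta>)\<^sup>2 = 0"
    by (simp add: inner_diff_right power2_norm_eq_inner)
  moreover have "0 \<le> t * inner \<Delta> vD"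
  proof -
    have "resolvent B (reflected_resolvent A y) = resolvent A y - vD"
      using y by (simp add: DR_op_def algebra_simps)
    then show ?thesis
      using proj_dom_diff_variational_ineq[OF mA mB resolvent_mem_dom_op[OF mA, of x]
          resolvent_mem_dom_op[OF mB, of "reflected_resolvent A y"]] \<open>0 \<le> t\<close>
      by (simp add: vD_def \<Delta>_def inner_commute)
  qed
  ultimately have "(norm \<Delta>)\<^sup>2 \<le> 0"
    by linarith
  then show ?thesis
    by (simp add: \<Delta>_def)
qed

lemma ran_sum_shift_mem_closure:
  fixes A B :: "'a::{real_inner,complete_space} \<Rightarrow> 'a set"
  defines "R \<equiv> {a + b | a b. a \<in> ran_op A \<and> b \<in> ran_op B}"
    and "vD \<equiv> proj (closure {a - b | a b. a \<in> dom_op A \<and> b \<in> dom_op B}) 0"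
  assumes mA: "maximally_monotone A" and mB: "maximally_monotone B" and "r \<in> closure R"
  shows "r + vD \<in> closure R"
proof -
  define a0 where "a0 = resolvent A 0"
  have bdd: "inner vD c \<le> inner vD a0 - inner vD vD" if "c \<in> dom_op B" for c
    using proj_dom_diff_variational_ineq[OF mA mB resolvent_mem_dom_op[OF mA, of 0] that]
    by (simp add: vD_def a0_def inner_diff_right)
  have shift_B: "b' + vD \<in> closure (ran_op B)" if b': "b' \<in> ran_op B" for b'
  proof -
    obtain b where "b' \<in> B b"
      using b' by (auto simp: ran_op_def)
    then show ?thesis
      using ran_op_shift_mem_closure[OF mB _ bdd] by blast
  qed
  have R: "R = ran_op A + ran_op B"
    by (auto simp: R_def set_plus_def)
  have "(+) vD ` R \<subseteq> closure R"
  proof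
    fix z assume "z \<in> (+) vD ` R"
    then obtain a' b' where "a' \<in> ran_op A" "b' \<in> ran_op B" "z = a' + (b' + vD)"
      by (auto simp: R set_plus_def algebra_simps)
    then have "z \<in> closure (ran_op A) + closure (ran_op B)"
      using closure_subset shift_B by blast
    then show "z \<in> closure R"
      using closure_sum by (auto simp: R)
  qed
  then have "(+) vD ` closure R \<subseteq> closure R"
    by (metis closure_translation closure_closure closure_mono)
  then show ?thesis
    using \<open>r \<in> closure R\<close> by (auto simp: add.commute)
qed

lemma min_displacement_eq_proj_dom_diff:
  fixes A B :: "'a::{real_inner,complete_space} \<Rightarrow> 'a set"
  defines "T \<equiv> DR_op A B"
    and "D \<equiv> {a - b | a b. a \<in> dom_op A \<and> b \<in> dom_op B}"
    and "R \<equiv> {a + b | a b. a \<in> ran_op A \<and> b \<in> ran_op B}"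
  assumes mA: "maximally_monotone A" and mB: "maximally_monotone B"
    and S: "closure {y - T y | y. True} = closure D \<inter> closure R"
    and "proj (closure R) 0 = 0"
  shows "proj (closure {y - T y | y. True}) 0 = proj (closure D) 0"
proof -
  have cD: "convex (closure D)" and cR: "convex (closure R)"
    unfolding D_def R_def using mA mB by (rule convex_closure_dom_diff convex_closure_ran_sum)+
  have "resolvent A 0 - resolvent B 0 \<in> D"
    using resolvent_mem_dom_op[OF mA] resolvent_mem_dom_op[OF mB] by (auto simp: D_def)
  then have "closure D \<noteq> {}"
    using closure_subset by auto
  then have vD: "proj (closure D) 0 \<in> closure D" "\<forall>y\<in>closure D. norm (proj (closure D) 0) \<le> norm y"
    using proj_zero_min_norm[OF closed_closure cD] by auto
  have "0 - resolvent A 0 + (0 - resolvent B 0) \<in> R"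
    using resolvent_mem[OF mA, of 0] resolvent_mem[OF mB, of 0] unfolding R_def ran_op_def by blast
  then have "0 \<in> closure R"
    using proj_zero_min_norm(1)[OF closed_closure cR] \<open>proj (closure R) 0 = 0\<close> closure_subset
    by (metis empty_iff subsetD)
  then have "proj (closure D) 0 \<in> closure R"
    using ran_sum_shift_mem_closure[OF mA mB, of 0] by (simp add: D_def R_def)
  with vD(1) have v: "proj (closure D \<inter> closure R) 0 \<in> closure D \<inter> closure R"
    "\<forall>y\<in>closure D \<inter> closure R. norm (proj (closure D \<inter> closure R) 0) \<le> norm y"
    using proj_zero_min_norm[OF closed_Int[OF closed_closure closed_closure] convex_Int[OF cD cR]]
    by blast+
  with vD \<open>proj (closure D) 0 \<in> closure R\<close>
  have "\<forall>y\<in>closure D. norm (proj (closure D \<inter> closure R) 0) \<le> norm y"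
    by (meson IntI order_trans)
  then have "proj (closure D) 0 = proj (closure D \<inter> closure R) 0"
    using proj_zero_eqI[OF cD] v(1) by blast
  then show ?thesis
    using S by simp
qed

theorem corollary5p7:
  fixes A B :: "'a::{real_inner, complete_space} \<Rightarrow> 'a set"
    and f x :: 'a
  defines "T \<equiv> DR_op A B"
  defines "v \<equiv> proj (closure {y - T y | y. True}) 0"
  defines "D \<equiv> {a - b | a b. a \<in> dom_op A \<and> b \<in> dom_op B}"
  defines "R \<equiv> {a + b | a b. a \<in> ran_op A \<and> b \<in> ran_op B}"
  defines "vD \<equiv> proj (closure D) 0"
  defines "vR \<equiv> proj (closure R) 0"
  assumes "maximally_monotone A" and "maximally_monotone B"
    and "closure {y - T y | y. True} = closure (D \<inter> R)"
    and "closure (D \<inter> R) = closure D \<inter> closure R"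
    and "vR = 0"
    and "f = v + T f"
  shows "(\<forall>n::nat. resolvent A ((T ^^ n) f) = resolvent A (f - real n *\<^sub>R vD)
                 \<and> resolvent A (f - real n *\<^sub>R vD) = resolvent A f)
      \<and> bounded (range (\<lambda>n::nat. resolvent A ((T ^^ n) x)))
      \<and> bounded (range (\<lambda>n::nat. resolvent B (reflected_resolvent A ((T ^^ n) x))))"
proof -
  note mA = \<open>maximally_monotone A\<close> and mB = \<open>maximally_monotone B\<close>
  have "convex (closure {y - T y | y. True})"
    using assms(9,10) convex_Int[OF convex_closure_dom_diff[OF mA mB] convex_closure_ran_sum[OF mA mB]]
    by (simp add: D_def R_def)
  then have v_min: "norm v \<le> norm (y - T y)" for y
    unfolding v_def by (rule proj_closure_zero_le) blast
  have "v = vD"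
    using min_displacement_eq_proj_dom_diff[OF mA mB] assms(9-11)
    by (simp add: v_def vD_def vR_def T_def D_def R_def)
  have "f - T f = v"
    using \<open>f = v + T f\<close> by (metis add_diff_cancel_right')
  note orbit = min_displacement_orbit[OF DR_op_firmly_nonexpansive[OF mA mB, folded T_def] v_min this]
  have JA: "resolvent A ((T ^^ n) f) = resolvent A f" for n
  proof (rule resolvent_DR_shift_eq[OF mA mB, folded D_def vD_def T_def])
    show "(T ^^ n) f - T ((T ^^ n) f) = vD" "f - T f = vD" "(T ^^ n) f = f - real n *\<^sub>R vD"
      using orbit \<open>f - T f = v\<close> \<open>v = vD\<close> by simp_all
  qed simp
  have "resolvent B (reflected_resolvent A z) = resolvent A z - (z - T z)" for z
    by (simp add: T_def DR_op_def)
  then have JB: "resolvent B (reflected_resolvent A ((T ^^ n) f)) = resolvent A f - v" for n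
    by (simp only: JA orbit(2))
  note T_ne = DR_op_nonexpansive[OF mA mB, folded T_def]
  have "bounded (range (\<lambda>n. resolvent A ((T ^^ n) x)))"
    by (rule bounded_range_funpow_image[OF T_ne resolvent_nonexpansive[OF mA], of f]) (simp add: JA)
  moreover have "bounded (range (\<lambda>n. resolvent B (reflected_resolvent A ((T ^^ n) x))))"
    by (rule bounded_range_funpow_image[OF T_ne order_trans[OF resolvent_nonexpansive[OF mB]
          reflected_resolvent_nonexpansive[OF mA]], of f]) (simp add: JB)
  ultimately show ?thesis
    using JA orbit(1) \<open>v = vD\<close> by simp
qed

end
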